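(* Let $p$ be an odd prime. The family $\{1+p^n\mathbb{N}_0:n\in\mathbb{N}\}$ coincides with the set of ${\uparrow}$-chain elements of the poset $\mathcal{X}_p$ (and this set is linearly ordered).
   Context: $\mathbb{N}=\{1,2,\dots\}$, $\mathbb{N}_0=\{0\}\cup\mathbb{N}$, $x^{\mathbb{N}}=\{x^k:k\in\mathbb{N}\}$. $\mathcal{X}_p=\{\overline{a^{\mathbb{N}}}:a\in\mathbb{N}\setminus p\mathbb{N},\ a\ne1\}$, closures taken in the $p$-adic topology on $\mathbb{N}\setminus p\mathbb{N}$ (generated by the sets $x+p^m\mathbb{N}_0$, $x,m\in\mathbb{N}$), partially ordered by reverse inclusion: $X\le Y$ iff $Y\subseteq X$. An element $t$ of a poset $(P,\le)$ is a ${\uparrow}$-chain element if its upper set ${\uparrow}t=\{x\in P:x\ge t\}$ is a chain (any two elements are comparable). *)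

theory Defs
  imports "HOL-Analysis.Analysis" "HOL-Computational_Algebra.Primes"
begin

definition coprime_part :: "nat \<Rightarrow> nat set" where
  "coprime_part p = {n. n \<ge> 1 \<and> \<not> p dvd n}"

definition progr :: "nat \<Rightarrow> nat \<Rightarrow> nat \<Rightarrow> nat set" where
  "progr p x m = {x + p ^ m * k | k. True}"

text \<open>The p-adic topology on N minus pN, generated by the sets x + p^m N_0
  (x, m positive; x ranging over the space so that the sets lie in it).\<close>
definition padic_top :: "nat \<Rightarrow> nat topology" where
  "padic_top p = topology_generated_by
     {progr p x m | x m. x \<in> coprime_part p \<and> m \<ge> 1}"

definition pows :: "nat \<Rightarrow> nat set" where
  "pows a = {a ^ k | k. k \<ge> 1}"

text \<open>The poset X_p (as a set of sets; order is reverse inclusion).\<close>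
definition Xp :: "nat \<Rightarrow> nat set set" where
  "Xp p = {padic_top p closure_of pows a | a. a \<in> coprime_part p \<and> a \<noteq> 1}"

definition Xle :: "nat set \<Rightarrow> nat set \<Rightarrow> bool" where
  "Xle X Y \<longleftrightarrow> Y \<subseteq> X"

definition upchain_elem :: "'a set \<Rightarrow> ('a \<Rightarrow> 'a \<Rightarrow> bool) \<Rightarrow> 'a \<Rightarrow> bool" where
  "upchain_elem P le t \<longleftrightarrow> t \<in> P \<and>
     (\<forall>x\<in>P. \<forall>y\<in>P. le t x \<longrightarrow> le t y \<longrightarrow> le x y \<or> le y x)"

end

theory Submission
  imports Defs "HOL-Number_Theory.Number_Theory"
begin

text \<open>
  The closure of the powers of \<open>a\<close> is the set of \<open>m\<close> prime to \<open>p\<close> such that for every \<open>M\<close>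
  some power \<open>a^k\<close> is congruent to \<open>m\<close> modulo \<open>p^M\<close>.

  If \<open>a = 1 + p^v u\<close> with \<open>p\<close> not dividing \<open>u\<close>, then for odd \<open>p\<close> raising \<open>a\<close> to the power
  \<open>p\<close> raises the exponent \<open>v\<close> by exactly one. Hence the powers of \<open>a\<close> that are \<open>1\<close> modulo
  \<open>p^M\<close> contain an element \<open>1 + p^M w\<close> with \<open>p\<close> not dividing \<open>w\<close>, and multiplying by powers
  of it corrects a congruence modulo \<open>p^M\<close> to one modulo \<open>p^(M+1)\<close>. So the closure of the
  powers of \<open>a\<close> is all of \<open>1 + p^v N_0\<close>: the closures of the \<open>a = 1 (mod p)\<close> are exactly
  these sets, and they form a chain.

  If \<open>a\<close> is not \<open>1\<close> modulo \<open>p\<close> and \<open>d\<close> is its order modulo \<open>p\<close>, the closures of \<open>a^d\<close>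
  and \<open>a^p\<close> are contained in that of \<open>a\<close> but are incomparable. The closure of \<open>a^p\<close>
  contains \<open>a^p\<close>, which is congruent to \<open>a\<close> and hence not \<open>1\<close> modulo \<open>p\<close>. The closure of
  \<open>a^d\<close> is some \<open>1 + p^w N_0\<close> and contains \<open>1 + p^w\<close>, while every power of \<open>a^p\<close> that is
  \<open>1\<close> modulo \<open>p\<close> is a power of \<open>(a^d)^p\<close> and thus \<open>1\<close> modulo \<open>p^(w+1)\<close>.
\<close>

section \<open>Basic neighbourhoods of the p-adic topology\<close>

lemma mem_progr_self: "x \<in> progr p x n"
  unfolding progr_def by (auto intro: exI[of _ 0])

lemma progr_subset_coprime_part:
  assumes "x \<in> coprime_part p" "n \<ge> 1"
  shows "progr p x n \<subseteq> coprime_part p"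
proof
  fix y assume "y \<in> progr p x n"
  then obtain k where y: "y = x + p^n * k" unfolding progr_def by blast
  have "p dvd p^n * k" using assms(2) by (simp add: dvd_power)
  then show "y \<in> coprime_part p"
    using assms(1) unfolding y coprime_part_def by (auto simp: dvd_add_left_iff)
qed

lemma progr_antimono:
  assumes "n1 \<le> n2"
  shows "progr p x n2 \<subseteq> progr p x n1"
proof
  fix y assume "y \<in> progr p x n2"
  then obtain k where "y = x + p^n2 * k" unfolding progr_def by blast
  moreover have "p^n2 = p^n1 * p^(n2 - n1)" using assms by (simp flip: power_add)
  ultimately have "y = x + p^n1 * (p^(n2 - n1) * k)" by simp
  then show "y \<in> progr p x n1" unfolding progr_def by blast
qed

lemma progr_nested: "progr p x n1 \<subseteq> progr p x n2 \<or> progr p x n2 \<subseteq> progr p x n1"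
  using progr_antimono nat_le_linear by blast

lemma progr_translate:
  assumes "y \<in> progr p x n"
  shows "progr p y n \<subseteq> progr p x n"
proof
  fix z assume "z \<in> progr p y n"
  moreover obtain j where "y = x + p^n * j" using assms unfolding progr_def by blast
  ultimately obtain k where "z = x + p^n * (j + k)"
    unfolding progr_def by (auto simp: algebra_simps)
  then show "z \<in> progr p x n" unfolding progr_def by blast
qed

lemma mem_progr_one_iff: "m \<in> progr p 1 v \<longleftrightarrow> m \<ge> 1 \<and> [m = 1] (mod p^v)"
  unfolding progr_def using cong_le_nat[of 1 m "p^v"] by (auto simp: cong_def ac_simps)

lemma one_in_coprime_part: "p \<noteq> 1 \<Longrightarrow> 1 \<in> coprime_part p"
  unfolding coprime_part_def by simp

lemma pow_in_coprime_part:
  assumes "prime p" "a \<in> coprime_part p"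
  shows "a^n \<in> coprime_part p"
  using assms prime_dvd_power[OF assms(1)] unfolding coprime_part_def by auto

lemma topspace_padic_top: "topspace (padic_top p) = coprime_part p"
  unfolding padic_top_def topology_generated_by_topspace
proof
  show "\<Union> {progr p x m | x m. x \<in> coprime_part p \<and> m \<ge> 1} \<subseteq> coprime_part p"
    using progr_subset_coprime_part by blast
  show "coprime_part p \<subseteq> \<Union> {progr p x m | x m. x \<in> coprime_part p \<and> m \<ge> 1}"
  proof
    fix x assume "x \<in> coprime_part p"
    then have "progr p x 1 \<in> {progr p x m | x m. x \<in> coprime_part p \<and> m \<ge> 1}" by blast
    then show "x \<in> \<Union> {progr p x m | x m. x \<in> coprime_part p \<and> m \<ge> 1}"
      using mem_progr_self by blast
  qed
qed

lemma openin_padic_top_progr: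
  assumes "x \<in> coprime_part p" "M \<ge> 1"
  shows "openin (padic_top p) (progr p x M)"
  unfolding padic_top_def using assms by (intro topology_generated_by_Basis) blast

lemma openin_padic_top_contains_progr:
  assumes "openin (padic_top p) U" "m \<in> U"
  shows "\<exists>M\<ge>1. progr p m M \<subseteq> U"
proof -
  have "generate_topology_on {progr p x M | x M. x \<in> coprime_part p \<and> M \<ge> 1} U"
    using assms(1) unfolding padic_top_def by (rule openin_topology_generated_by)
  then show ?thesis using assms(2)
  proof (induction arbitrary: m)
    case Empty
    then show ?case by simp
  next
    case (Int a b)
    then obtain M1 M2 where "M1 \<ge> 1" "progr p m M1 \<subseteq> a" "progr p m M2 \<subseteq> b"
      by blast
    then have "progr p m (max M1 M2) \<subseteq> a \<inter> b"
      using progr_antimono[of M1 "max M1 M2" p m] progr_antimono[of M2 "max M1 M2" p m] by auto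
    then show ?case using \<open>M1 \<ge> 1\<close> by (intro exI[of _ "max M1 M2"]) auto
  next
    case (UN K)
    then show ?case by blast
  next
    case (Basis s)
    then obtain x M where s: "s = progr p x M" and "M \<ge> 1" by blast
    then have "progr p m M \<subseteq> s" using progr_translate[of m p x M] Basis.prems by simp
    then show ?case using \<open>M \<ge> 1\<close> by blast
  qed
qed

lemma in_padic_closure_iff:
  "m \<in> padic_top p closure_of S \<longleftrightarrow>
     m \<in> coprime_part p \<and> (\<forall>M\<ge>1. progr p m M \<inter> S \<noteq> {})"
proof
  assume m: "m \<in> padic_top p closure_of S"
  then have m_in: "m \<in> coprime_part p"
    using closure_of_subset_topspace[of "padic_top p" S] topspace_padic_top by blast
  have "progr p m M \<inter> S \<noteq> {}" if "M \<ge> 1" for M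
  proof -
    have "openin (padic_top p) (progr p m M)" using m_in that by (rule openin_padic_top_progr)
    then show ?thesis using m mem_progr_self[of m p M] unfolding in_closure_of by blast
  qed
  with m_in show "m \<in> coprime_part p \<and> (\<forall>M\<ge>1. progr p m M \<inter> S \<noteq> {})" by blast
next
  assume m: "m \<in> coprime_part p \<and> (\<forall>M\<ge>1. progr p m M \<inter> S \<noteq> {})"
  have "\<exists>y. y \<in> S \<and> y \<in> U" if "m \<in> U" "openin (padic_top p) U" for U
    using m openin_padic_top_contains_progr[OF that(2,1)] by blast
  with m show "m \<in> padic_top p closure_of S"
    unfolding in_closure_of topspace_padic_top by blast
qed

section \<open>Closures of sets of powers\<close>

definition pow_closure :: "nat \<Rightarrow> nat \<Rightarrow> nat set" where
  "pow_closure p a = {m \<in> coprime_part p. \<forall>M. \<exists>k\<ge>1. [a^k = m] (mod p^M)}"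

lemma progr_meets_pows_iff:
  assumes "prime p" "a \<in> coprime_part p" "a \<noteq> 1"
  shows "progr p m M \<inter> pows a \<noteq> {} \<longleftrightarrow> (\<exists>k\<ge>1. [a^k = m] (mod p^M))"
proof
  assume "progr p m M \<inter> pows a \<noteq> {}"
  then obtain j k where "m + p^M * j = a^k" "k \<ge> 1" unfolding progr_def pows_def by blast
  then show "\<exists>k\<ge>1. [a^k = m] (mod p^M)" by (metis cong_def mod_mult_self2)
next
  assume "\<exists>k\<ge>1. [a^k = m] (mod p^M)"
  then obtain k where k: "k \<ge> 1" "[a^k = m] (mod p^M)" by blast
  define e where "e = totient (p^M)"
  have a: "a \<ge> 2" "\<not> p dvd a" using assms(2,3) unfolding coprime_part_def by auto
  then have "coprime a (p^M)" using assms(1) prime_imp_power_coprime by blast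
  then have "[a^e = 1] (mod p^M)" unfolding e_def by (rule euler_theorem)
  then have "[a^k * (a^e)^m = m * 1^m] (mod p^M)" using k(2) by (intro cong_mult cong_pow)
  then have cong: "[a^(k + e * m) = m] (mod p^M)" by (simp add: power_add power_mult)
  \<comment> \<open>adding a multiple of the period \<open>e\<close> to the exponent makes the power exceed \<open>m\<close>\<close>
  have "e \<ge> 1" unfolding e_def using prime_gt_0_nat[OF assms(1)] by (simp add: Suc_le_eq)
  then have "m < 2^(k + e * m)"
    using less_exp[of "k + e * m"] mult_le_mono1[of 1 e m] by linarith
  also have "\<dots> \<le> a^(k + e * m)" using a(1) by (rule power_mono) simp
  finally obtain q where "a^(k + e * m) = m + p^M * q"
    using cong cong_le_nat[of m "a^(k + e * m)"] by (auto simp: ac_simps)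
  moreover have "a^(k + e * m) \<in> pows a" unfolding pows_def using k(1) by auto
  ultimately show "progr p m M \<inter> pows a \<noteq> {}" unfolding progr_def by blast
qed

lemma closure_of_pows:
  assumes "prime p" "a \<in> coprime_part p" "a \<noteq> 1"
  shows "padic_top p closure_of pows a = pow_closure p a"
proof -
  have "\<exists>k\<ge>1. [a^k = m] (mod p^0)" for m by (auto intro: exI[of _ 1])
  then have "(\<forall>M\<ge>1. progr p m M \<inter> pows a \<noteq> {}) \<longleftrightarrow> (\<forall>M. \<exists>k\<ge>1. [a^k = m] (mod p^M))" for m
    using progr_meets_pows_iff[OF assms] by (metis less_one not_le)
  then show ?thesis
    unfolding pow_closure_def by (auto simp: in_padic_closure_iff)
qed

lemma Xp_eq_pow_closures:
  "prime p \<Longrightarrow> Xp p = {pow_closure p a | a. a \<in> coprime_part p \<and> a \<noteq> 1}"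
  unfolding Xp_def using closure_of_pows by auto

lemma mem_pow_closure_self: "a \<in> coprime_part p \<Longrightarrow> a \<in> pow_closure p a"
  unfolding pow_closure_def by (auto intro: exI[of _ 1])

lemma pow_closure_pow_subset:
  assumes "n \<ge> 1"
  shows "pow_closure p (a^n) \<subseteq> pow_closure p a"
proof
  fix m assume "m \<in> pow_closure p (a^n)"
  then have m: "m \<in> coprime_part p" "\<forall>M. \<exists>k\<ge>1. [a^(n * k) = m] (mod p^M)"
    unfolding pow_closure_def by (auto simp: power_mult)
  have "n * k \<ge> 1" if "k \<ge> 1" for k using assms that by simp
  with m show "m \<in> pow_closure p a" unfolding pow_closure_def by blast
qed

lemma pow_closure_cong:
  assumes "[b = 1] (mod q)" "m \<in> pow_closure p b" "q dvd p^M"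
  shows "[m = 1] (mod q)"
proof -
  obtain k where "[b^k = m] (mod p^M)" using assms(2) unfolding pow_closure_def by blast
  then have "[b^k = m] (mod q)" using assms(3) by (rule cong_dvd_modulus_nat)
  moreover have "[b^k = 1] (mod q)" using cong_pow[OF assms(1)] by simp
  ultimately show ?thesis by (metis cong_sym cong_trans)
qed

section \<open>Powers of elements congruent to one\<close>

lemma cong_add_mult_modulus: "[a + n * k = a] (mod n)"
  by (metis cong_def mod_mult_self2)

lemma one_plus_pow_expansion:
  "\<exists>W. (1 + y :: nat)^n = 1 + n * y + (n choose 2) * y^2 + y^3 * W"
proof (induction n)
  case 0
  then show ?case by simp
next
  case (Suc n)
  then obtain W where W: "(1 + y)^n = 1 + n * y + (n choose 2) * y^2 + y^3 * W" by blast
  have choose: "Suc n choose 2 = (n choose 2) + n"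
    using binomial_Suc_Suc[of n 1] by (simp add: numeral_2_eq_2)
  have "(1 + y)^Suc n = (1 + y) * (1 + n * y + (n choose 2) * y^2 + y^3 * W)" using W by simp
  also have "\<dots> = 1 + Suc n * y + ((n choose 2) + n) * y^2 + y^3 * ((n choose 2) + W + y * W)"
    by (simp add: algebra_simps power2_eq_square power3_eq_cube)
  finally show ?case unfolding choose by blast
qed

lemma pow_one_plus_prime_power_cong:
  fixes p w u j :: nat
  assumes "w \<ge> 1"
  shows "[(1 + p^w * u)^j = 1 + j * p^w * u] (mod p^(w+1))"
proof -
  obtain W where W: "(1 + p^w * u)^j = 1 + j * (p^w * u) + (j choose 2) * (p^w * u)^2 + (p^w * u)^3 * W"
    using one_plus_pow_expansion by blast
  have "w + w = (w+1) + (w-1)" using assms by simp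
  then have "p^w * p^w = p^(w+1) * p^(w-1)" by (metis power_add)
  then have square: "(p^w * u)^2 = p^(w+1) * (p^(w-1) * u^2)"
    by (simp add: power2_eq_square algebra_simps)
  have "(1 + p^w * u)^j = 1 + j * p^w * u + p^(w+1) * (p^(w-1) * u^2 * ((j choose 2) + p^w * u * W))"
    unfolding W by (simp add: square power3_eq_cube flip: power2_eq_square) (simp add: algebra_simps)
  then show ?thesis by (metis cong_add_mult_modulus)
qed

lemma cong_one_pow_prime_power:
  fixes p w x :: nat
  assumes "[x = 1] (mod p^w)" "x \<ge> 1" "w \<ge> 1"
  shows "[x^p = 1] (mod p^(w+1))"
proof -
  obtain u where "x = 1 + p^w * u" using assms(1,2) cong_le_nat by (auto simp: ac_simps)
  then have "[x^p = 1 + p^(w+1) * u] (mod p^(w+1))"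
    using pow_one_plus_prime_power_cong[OF assms(3), of p u p] by (simp add: ac_simps)
  then show ?thesis using cong_add_mult_modulus cong_trans by blast
qed

lemma pow_prime_lifts_exponent:
  fixes p v u :: nat
  assumes "prime p" "odd p" "v \<ge> 1" "\<not> p dvd u"
  shows "\<exists>u'. (1 + p^v * u)^p = 1 + p^(v+1) * u' \<and> \<not> p dvd u'"
proof -
  obtain v0 where v0: "v = Suc v0" using assms(3) by (cases v) auto
  define q where "q = p^v0"
  have pv: "p^v = p * q" "p^(v+1) = p * p * q" unfolding v0 q_def by simp_all
  \<comment> \<open>for odd \<open>p\<close> the quadratic term of the binomial expansion is divisible by \<open>p^(v+2)\<close>\<close>
  define h where "h = (p - 1) div 2"
  have "p choose 2 = p * h"
    using assms(2) unfolding choose_two h_def by (simp add: div_mult_swap)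
  moreover obtain W where
    "(1 + p * q * u)^p = 1 + p * (p * q * u) + (p choose 2) * (p * q * u)^2 + (p * q * u)^3 * W"
    using one_plus_pow_expansion by blast
  ultimately have "(1 + p^v * u)^p = 1 + p^(v+1) * (u + p * (h * q * u^2 + q * q * u^3 * W))"
    unfolding pv by (simp add: algebra_simps power2_eq_square power3_eq_cube)
  moreover have "\<not> p dvd u + p * (h * q * u^2 + q * q * u^3 * W)"
    using assms(4) by (simp add: dvd_add_left_iff)
  ultimately show ?thesis by blast
qed

lemma pow_prime_power_lifts_exponent:
  fixes p v u :: nat
  assumes "prime p" "odd p" "v \<ge> 1" "\<not> p dvd u"
  shows "\<exists>u'. (1 + p^v * u)^(p^j) = 1 + p^(v+j) * u' \<and> \<not> p dvd u'"
proof (induction j)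
  case 0
  then show ?case using assms(4) by auto
next
  case (Suc j)
  then obtain u1 where u1: "(1 + p^v * u)^(p^j) = 1 + p^(v+j) * u1" "\<not> p dvd u1" by blast
  obtain u2 where u2: "(1 + p^(v+j) * u1)^p = 1 + p^(v+j+1) * u2" "\<not> p dvd u2"
    using pow_prime_lifts_exponent[OF assms(1,2), of "v+j" u1] assms(3) u1(2) by auto
  have "(1 + p^v * u)^(p^Suc j) = ((1 + p^v * u)^(p^j))^p"
    by (simp only: power_Suc2 power_mult)
  also have "\<dots> = 1 + p^(v + Suc j) * u2" using u1 u2 by simp
  finally show ?case using u2(2) by blast
qed

lemma cong_lift_add_multiple:
  fixes x m n q :: nat
  assumes "[x = m] (mod n)" "n > 0" "q > 0"
  shows "\<exists>t. [x + n * t = m] (mod n * q)"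
proof -
  have "[m + n * q * x = x] (mod n)"
    using assms(1) cong_add_mult_modulus[of m n "q * x"] by (metis cong_sym cong_trans mult.assoc)
  moreover have "x \<le> m + n * q * x" using assms(2,3) by (simp add: trans_le_add2)
  ultimately obtain t where "m + n * q * x = t * n + x" using cong_le_nat by blast
  then have "x + n * t = m + (n * q) * x" by simp
  then show ?thesis using cong_add_mult_modulus by metis
qed

lemma cong_lift_by_power:
  fixes p M w x m :: nat
  assumes "prime p" "M \<ge> 1" "\<not> p dvd w" "\<not> p dvd x" "[x = m] (mod p^M)"
  shows "\<exists>j. [x * (1 + p^M * w)^j = m] (mod p^(M+1))"
proof -
  have p_pos: "p > 0" using assms(1) by (rule prime_gt_0_nat)
  have mod_eq: "p^(M+1) = p^M * p" by simp
  obtain t where t: "[x + p^M * t = m] (mod p^(M+1))"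
    using cong_lift_add_multiple[OF assms(5) _ p_pos] p_pos unfolding mod_eq by auto
  have "coprime (x * w) p"
    using assms(1,3,4) by (simp add: prime_imp_coprime coprime_commute)
  then obtain j where j: "[x * w * j = t] (mod p)" using cong_solve by blast
  have "[x * (1 + p^M * w)^j = x * (1 + j * p^M * w)] (mod p^(M+1))"
    using pow_one_plus_prime_power_cong[OF assms(2)] by (rule cong_scalar_left)
  also have "x * (1 + j * p^M * w) = x + p^M * (x * w * j)" by (simp add: algebra_simps)
  also have "[\<dots> = x + p^M * t] (mod p^(M+1))"
  proof (rule cong_add[OF cong_refl])
    show "[p^M * (x * w * j) = p^M * t] (mod p^(M+1))"
      using j unfolding mod_eq cong_def by (simp add: mod_mult_mult1)
  qed
  also have "[x + p^M * t = m] (mod p^(M+1))" by (rule t)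
  finally show ?thesis by blast
qed

lemma powers_cover_cong_one:
  fixes p v u m :: nat
  assumes "prime p" "odd p" "v \<ge> 1" "\<not> p dvd u" "[m = 1] (mod p^v)"
  shows "\<exists>k\<ge>1. [(1 + p^v * u)^k = m] (mod p^M)"
proof -
  define b where "b = 1 + p^v * u"
  have "[b = 1] (mod p^v)" unfolding b_def by (rule cong_add_mult_modulus)
  then have b_cong: "[b^1 = m] (mod p^v)" using assms(5) by (metis cong_sym cong_trans power_one_right)
  have "p dvd p^v * u" using assms(3) by (intro dvd_mult2 dvd_power) auto
  then have "p dvd b \<longleftrightarrow> p dvd 1" unfolding b_def by (rule dvd_add_left_iff)
  then have "\<not> p dvd b" using assms(1) by auto
  have lifted: "\<exists>k\<ge>1. [b^k = m] (mod p^M)" if "M \<ge> v" for M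
    using that
  proof (induction M rule: dec_induct)
    case base
    then show ?case using b_cong by blast
  next
    case (step M)
    then obtain k where k: "k \<ge> 1" "[b^k = m] (mod p^M)" by blast
    obtain w where w: "b^(p^(M-v)) = 1 + p^M * w" "\<not> p dvd w"
      using pow_prime_power_lifts_exponent[OF assms(1-4), of "M-v"] step.hyps
      unfolding b_def by auto
    have "\<not> p dvd b^k" using \<open>\<not> p dvd b\<close> assms(1) prime_dvd_power by blast
    then obtain j where "[b^k * (1 + p^M * w)^j = m] (mod p^(M+1))"
      using cong_lift_by_power[OF assms(1) _ w(2) _ k(2)] assms(3) step.hyps by auto
    then have "[b^(k + p^(M-v) * j) = m] (mod p^Suc M)"
      by (simp add: power_add power_mult w(1))
    then show ?case using k(1) by (intro exI[of _ "k + p^(M-v) * j"]) auto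
  qed
  obtain k where "k \<ge> 1" "[b^k = m] (mod p^(max M v))" using lifted[of "max M v"] by auto
  moreover have "p^M dvd p^(max M v)" by (simp add: le_imp_power_dvd)
  ultimately show ?thesis using cong_dvd_modulus_nat unfolding b_def by blast
qed

lemma pow_closure_one_plus_prime_power:
  assumes "prime p" "odd p" "v \<ge> 1" "\<not> p dvd u"
  shows "pow_closure p (1 + p^v * u) = progr p 1 v"
proof
  show "pow_closure p (1 + p^v * u) \<subseteq> progr p 1 v"
  proof
    fix m assume m: "m \<in> pow_closure p (1 + p^v * u)"
    have "[m = 1] (mod p^v)"
      using pow_closure_cong[OF cong_add_mult_modulus m dvd_refl] .
    moreover have "m \<ge> 1" using m unfolding pow_closure_def coprime_part_def by simp
    ultimately show "m \<in> progr p 1 v" using mem_progr_one_iff by blast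
  qed
  show "progr p 1 v \<subseteq> pow_closure p (1 + p^v * u)"
  proof
    fix m assume m: "m \<in> progr p 1 v"
    then have "\<forall>M. \<exists>k\<ge>1. [(1 + p^v * u)^k = m] (mod p^M)"
      using powers_cover_cong_one[OF assms] mem_progr_one_iff by blast
    moreover have "p \<noteq> 1" using prime_gt_1_nat[OF assms(1)] by simp
    then have "m \<in> coprime_part p"
      using progr_subset_coprime_part[OF one_in_coprime_part assms(3)] m by blast
    ultimately show "m \<in> pow_closure p (1 + p^v * u)" unfolding pow_closure_def by blast
  qed
qed

lemma pow_closure_of_cong_one:
  assumes "prime p" "odd p" "a \<in> coprime_part p" "a \<noteq> 1" "[a = 1] (mod p)"
  shows "\<exists>v\<ge>1. pow_closure p a = progr p 1 v"
proof -
  have "a \<ge> 1" using assms(3) unfolding coprime_part_def by simp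
  have "a - 1 \<noteq> 0" "\<not> is_unit p" using assms(1,3,4) unfolding coprime_part_def by auto
  then obtain u where u: "a - 1 = p^multiplicity p (a - 1) * u" "\<not> p dvd u"
    by (rule multiplicity_decompose')
  define v where "v = multiplicity p (a - 1)"
  have "p dvd a - 1" using assms(5) \<open>a \<ge> 1\<close> cong_altdef_nat by blast
  then have "v \<ge> 1"
    using prime_multiplicity_gt_zero_iff[of p "a - 1"] assms(1) \<open>a - 1 \<noteq> 0\<close>
    unfolding v_def by (simp add: Suc_le_eq)
  moreover have "a = 1 + p^v * u" using u \<open>a - 1 \<noteq> 0\<close> unfolding v_def by simp
  ultimately show ?thesis
    using pow_closure_one_plus_prime_power[OF assms(1,2) _ u(2)] by metis
qed

section \<open>Elements not congruent to one\<close>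

lemma ord_prime_bounds:
  fixes p a :: nat
  assumes "prime p" "\<not> p dvd a"
  shows "0 < ord p a" "ord p a < p"
proof -
  show "0 < ord p a" using assms by (simp add: prime_imp_coprime)
  have "ord p a dvd p - 1" using fermat_theorem[OF assms] ord_divides by blast
  moreover have "p - 1 > 0" using prime_gt_1_nat[OF assms(1)] by simp
  ultimately have "ord p a \<le> p - 1" by (rule dvd_imp_le)
  then show "ord p a < p" using prime_gt_1_nat[OF assms(1)] by linarith
qed

lemma one_plus_prime_power_notin_pow_closure:
  fixes p a w :: nat
  assumes "prime p" "\<not> p dvd a" "w \<ge> 1" "[a^ord p a = 1] (mod p^w)"
  shows "1 + p^w \<notin> pow_closure p (a^p)"
proof
  assume "1 + p^w \<in> pow_closure p (a^p)"
  then obtain k where k: "[(a^p)^k = 1 + p^w] (mod p^(w+1))" unfolding pow_closure_def by blast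
  define d where "d = ord p a"
  have "[1 + p^w = 1] (mod p)"
    using assms(3) cong_add_mult_modulus[of 1 p "p^(w-1)"] by (simp flip: power_Suc)
  moreover have "[(a^p)^k = 1 + p^w] (mod p)" using k by (rule cong_dvd_modulus_nat) simp
  ultimately have "[a^(p * k) = 1] (mod p)" by (metis cong_trans power_mult)
  then have "d dvd p * k" unfolding d_def using ord_divides by blast
  moreover have "\<not> p dvd d"
    using ord_prime_bounds[OF assms(1,2)] unfolding d_def by (auto dest: dvd_imp_le)
  then have "coprime d p" using prime_imp_coprime[OF assms(1)] coprime_commute by blast
  ultimately have "d dvd k" by (simp add: coprime_dvd_mult_right_iff)
  then obtain k' where k': "k = d * k'" by blast
  have "a \<noteq> 0" using assms(2) by (metis dvd_0_right)
  then have "a^d \<ge> 1" by simp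
  then have "[(a^d)^p = 1] (mod p^(w+1))"
    using assms(3,4) unfolding d_def by (intro cong_one_pow_prime_power)
  then have "[((a^d)^p)^k' = 1^k'] (mod p^(w+1))" by (rule cong_pow)
  moreover have "((a^d)^p)^k' = (a^p)^k" unfolding k' power_mult[symmetric] by (simp add: ac_simps)
  ultimately have "[1 + p^w = 1] (mod p^(w+1))" using k by (metis cong_sym cong_trans power_one)
  then have "p^(w+1) dvd p^w" by (simp add: cong_altdef_nat)
  then show False using prime_gt_1_nat[OF assms(1)] power_dvd_imp_le by fastforce
qed

lemma pow_closure_pow_prime_not_subset_progr_one:
  fixes p a w :: nat
  assumes "prime p" "a \<in> coprime_part p" "\<not> [a = 1] (mod p)" "w \<ge> 1"
  shows "\<not> pow_closure p (a^p) \<subseteq> progr p 1 w"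
proof
  have "\<not> p dvd a" using assms(2) unfolding coprime_part_def by simp
  assume "pow_closure p (a^p) \<subseteq> progr p 1 w"
  then have "a^p \<in> progr p 1 w"
    using mem_pow_closure_self[OF pow_in_coprime_part[OF assms(1,2)]] by blast
  then have "[a^p = 1] (mod p^w)" unfolding mem_progr_one_iff by blast
  then have "[a^p = 1] (mod p)" by (rule cong_dvd_modulus_nat) (use assms(4) in \<open>simp add: dvd_power\<close>)
  moreover have "[a^(p-1) * a = 1 * a] (mod p)"
    using fermat_theorem[OF assms(1) \<open>\<not> p dvd a\<close>] by (rule cong_scalar_right)
  then have "[a^p = a] (mod p)" using prime_gt_0_nat[OF assms(1)] by (simp flip: power_Suc2)
  ultimately have "[a = 1] (mod p)" using cong_sym cong_trans by blast
  with assms(3) show False by contradiction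
qed

lemma pow_closures_incomparable:
  fixes p a :: nat
  assumes "prime p" "odd p" "a \<in> coprime_part p" "\<not> [a = 1] (mod p)"
  shows "\<exists>X\<in>Xp p. \<exists>Y\<in>Xp p.
           X \<subseteq> pow_closure p a \<and> Y \<subseteq> pow_closure p a \<and> \<not> X \<subseteq> Y \<and> \<not> Y \<subseteq> X"
proof -
  define d where "d = ord p a"
  have "a \<noteq> 1" using assms(4) by auto
  have "\<not> p dvd a" using assms(3) unfolding coprime_part_def by simp
  have "d \<ge> 1" using ord_prime_bounds(1)[OF assms(1) \<open>\<not> p dvd a\<close>] unfolding d_def by linarith
  have "p \<ge> 1" using prime_gt_1_nat[OF assms(1)] by simp
  have powers: "a^n \<in> coprime_part p" "a^n \<noteq> 1" if "n \<ge> 1" for n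
    using pow_in_coprime_part[OF assms(1,3)] \<open>a \<noteq> 1\<close> that by auto
  obtain w where w: "w \<ge> 1" "pow_closure p (a^d) = progr p 1 w"
    using pow_closure_of_cong_one[OF assms(1,2) powers[OF \<open>d \<ge> 1\<close>] ord[of a p, folded d_def]]
    by blast
  have "a^d \<in> progr p 1 w" using mem_pow_closure_self[OF powers(1)[OF \<open>d \<ge> 1\<close>]] w(2) by simp
  then have "[a^ord p a = 1] (mod p^w)" unfolding mem_progr_one_iff d_def by blast
  then have "1 + p^w \<notin> pow_closure p (a^p)"
    using one_plus_prime_power_notin_pow_closure[OF assms(1) \<open>\<not> p dvd a\<close> w(1)] by blast
  moreover have "1 + p^w * 1 \<in> pow_closure p (a^d)" unfolding w(2) progr_def by blast
  ultimately have "\<not> pow_closure p (a^d) \<subseteq> pow_closure p (a^p)" by auto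
  moreover have "\<not> pow_closure p (a^p) \<subseteq> pow_closure p (a^d)"
    using pow_closure_pow_prime_not_subset_progr_one[OF assms(1,3,4) w(1)] w(2) by simp
  moreover have "pow_closure p (a^d) \<in> Xp p" "pow_closure p (a^p) \<in> Xp p"
    unfolding Xp_eq_pow_closures[OF assms(1)] using powers \<open>d \<ge> 1\<close> \<open>p \<ge> 1\<close> by blast+
  moreover have "pow_closure p (a^d) \<subseteq> pow_closure p a" "pow_closure p (a^p) \<subseteq> pow_closure p a"
    using pow_closure_pow_subset \<open>d \<ge> 1\<close> \<open>p \<ge> 1\<close> by blast+
  ultimately show ?thesis by blast
qed

section \<open>The up-chain elements of the poset\<close>

lemma progr_one_in_Xp:
  assumes "prime p" "odd p" "n \<ge> 1"
  shows "progr p 1 n \<in> Xp p"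
proof -
  have "p \<noteq> 1" using prime_gt_1_nat[OF assms(1)] by simp
  then have "\<not> p dvd 1" by simp
  then have "pow_closure p (1 + p^n * 1) = progr p 1 n"
    by (rule pow_closure_one_plus_prime_power[OF assms])
  moreover have "1 + p^n * 1 \<in> coprime_part p"
    using progr_subset_coprime_part[OF one_in_coprime_part[OF \<open>p \<noteq> 1\<close>] assms(3)]
    unfolding progr_def by blast
  moreover have "1 + p^n * 1 \<noteq> 1" using prime_gt_0_nat[OF assms(1)] by simp
  ultimately show ?thesis unfolding Xp_eq_pow_closures[OF assms(1)] by blast
qed

lemma Xp_subset_progr_one_is_progr_one:
  assumes "prime p" "odd p" "X \<in> Xp p" "X \<subseteq> progr p 1 n" "n \<ge> 1"
  shows "\<exists>v\<ge>1. X = progr p 1 v"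
proof -
  obtain a where a: "a \<in> coprime_part p" "a \<noteq> 1" "X = pow_closure p a"
    using assms(3) unfolding Xp_eq_pow_closures[OF assms(1)] by blast
  have "a \<in> progr p 1 n" using mem_pow_closure_self[OF a(1)] a(3) assms(4) by blast
  then have "[a = 1] (mod p^n)" unfolding mem_progr_one_iff by blast
  then have "[a = 1] (mod p)" by (rule cong_dvd_modulus_nat) (use assms(5) in \<open>simp add: dvd_power\<close>)
  then show ?thesis using pow_closure_of_cong_one[OF assms(1,2) a(1,2)] a(3) by blast
qed

lemma upchain_elem_progr_one:
  assumes "prime p" "odd p" "n \<ge> 1"
  shows "upchain_elem (Xp p) Xle (progr p 1 n)"
proof -
  have above: "\<exists>v. x = progr p 1 v" if "x \<in> Xp p" "Xle (progr p 1 n) x" for x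
    using Xp_subset_progr_one_is_progr_one[OF assms(1,2) that(1) _ assms(3)] that(2)
    unfolding Xle_def by blast
  have "Xle x y \<or> Xle y x"
    if xy: "x \<in> Xp p" "y \<in> Xp p" "Xle (progr p 1 n) x" "Xle (progr p 1 n) y" for x y
  proof -
    obtain u v where "x = progr p 1 u" "y = progr p 1 v"
      using above[OF xy(1,3)] above[OF xy(2,4)] by blast
    then show ?thesis using progr_nested unfolding Xle_def by blast
  qed
  then show ?thesis using progr_one_in_Xp[OF assms] unfolding upchain_elem_def by blast
qed

lemma upchain_elem_imp_progr_one:
  assumes "prime p" "odd p" "upchain_elem (Xp p) Xle t"
  shows "\<exists>n\<ge>1. t = progr p 1 n"
proof -
  obtain a where a: "a \<in> coprime_part p" "a \<noteq> 1" "t = pow_closure p a"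
    using assms(3) unfolding upchain_elem_def Xp_eq_pow_closures[OF assms(1)] by blast
  show ?thesis
  proof (cases "[a = 1] (mod p)")
    case True
    then show ?thesis using pow_closure_of_cong_one[OF assms(1,2) a(1,2)] a(3) by blast
  next
    case False
    then obtain X Y where "X \<in> Xp p" "Y \<in> Xp p" "Xle t X" "Xle t Y" "\<not> Xle X Y" "\<not> Xle Y X"
      using pow_closures_incomparable[OF assms(1,2) a(1)] a(3) unfolding Xle_def by blast
    with assms(3) show ?thesis unfolding upchain_elem_def by blast
  qed
qed

theorem lemma4p5:
  fixes p :: nat
  assumes "prime p" and "odd p"
  shows "{progr p 1 n | n. n \<ge> 1} = {t. upchain_elem (Xp p) Xle t}
       \<and> (\<forall>X\<in>{progr p 1 n | n. n \<ge> 1}. \<forall>Y\<in>{progr p 1 n | n. n \<ge> 1}. Xle X Y \<or> Xle Y X)"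
proof
  show "{progr p 1 n | n. n \<ge> 1} = {t. upchain_elem (Xp p) Xle t}"
    using upchain_elem_progr_one[OF assms] upchain_elem_imp_progr_one[OF assms] by blast
  show "\<forall>X\<in>{progr p 1 n | n. n \<ge> 1}. \<forall>Y\<in>{progr p 1 n | n. n \<ge> 1}. Xle X Y \<or> Xle Y X"
    using progr_nested unfolding Xle_def by blast
qed

end
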